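(* Let $G_{l_1+l_2}$ be the two-layer stochastic block model $G(n,n_1,n_2,p_1,p_2)$ satisfying the standing assumptions below, and let $e_{22}$ and $e_{2out}$ be the expected numbers of internal and outgoing edges of a community of the ground-truth layer $l_2$. If $3e_{22}>e_{2out}$, then for every partition $l'_2$ close to $l_2$, the (expected) modularity of $l_2$ in $G_{l_1+l_2}$ is strictly larger than that of $l'_2$, i.e. $Q_{l_2}>Q_{l'_2}$.
   Context: Multi-layer stochastic block model $G(n,n_1,\dots,n_L,p_1,\dots,p_L)$: a random graph on $n$ nodes with $L$ layers. For each layer $l$ the nodes are partitioned into $n_l$ planted communities of size $s_l=n/n_l$; independently for each layer, each pair of distinct nodes in a common community of layer $l$ receives an edge from layer $l$ with probability $p_l$; the graph is the simple union of all generated edges. The partitions of different layers are independent: for any $k\ge 2$ distinct layers and any choice of one community from each, their intersection has $n/(n_{l_1}\cdots n_{l_k})$ nodes (in expectation). Standing assumptions: $n_l\ge 4$, $p_l\in[0.05,1]$ for every layer, and $n\ge 2\prod_l n_l$. Modularity: for a partition of the nodes of a graph with $e$ edges, if community $i$ has $e^i_{in}$ internal edges, $e^i_{out}$ edges with exactly one endpoint in it, and total degree $d^i=2e^i_{in}+e^i_{out}$, the modularity is $Q=\sum_i\big(\frac{e^i_{in}}{e}-(\frac{d^i}{2e})^2\big)$; here all edge counts are replaced by their expected values in the model. Close partitions: a partition $l'$ is close to a partition $l$ if $l'$ is obtained from $l$ by one of: (1) moving one node from its community to another community; (2) exchanging the community memberships of two nodes; (3) separating one node from its community to form a new singleton community.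 *)

theory Defs
  imports Complex_Main "HOL-Library.Disjoint_Sets"
begin

definition same_comm :: "'a set set \<Rightarrow> 'a \<Rightarrow> 'a \<Rightarrow> bool" where
  "same_comm P u v \<longleftrightarrow> (\<exists>A\<in>P. u \<in> A \<and> v \<in> A)"

text \<open>Probability that the pair {u,v} is an edge of the two-layer model (simple union of
  the independently generated layer edges).\<close>
definition edge_prob2 ::
  "'a set set \<Rightarrow> real \<Rightarrow> 'a set set \<Rightarrow> real \<Rightarrow> 'a \<Rightarrow> 'a \<Rightarrow> real" where
  "edge_prob2 P1 p1 P2 p2 u v =
     (if u = v then 0
      else 1 - (1 - (if same_comm P1 u v then p1 else 0)) * (1 - (if same_comm P2 u v then p2 else 0)))"

definition exp_edges :: "('a \<Rightarrow> 'a \<Rightarrow> real) \<Rightarrow> 'a set \<Rightarrow> real" where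
  "exp_edges w V = (\<Sum>u\<in>V. \<Sum>v\<in>V. w u v) / 2"

definition exp_in :: "('a \<Rightarrow> 'a \<Rightarrow> real) \<Rightarrow> 'a set \<Rightarrow> real" where
  "exp_in w C = (\<Sum>u\<in>C. \<Sum>v\<in>C. w u v) / 2"

definition exp_out :: "('a \<Rightarrow> 'a \<Rightarrow> real) \<Rightarrow> 'a set \<Rightarrow> 'a set \<Rightarrow> real" where
  "exp_out w V C = (\<Sum>u\<in>C. \<Sum>v\<in>V - C. w u v)"

definition exp_deg :: "('a \<Rightarrow> 'a \<Rightarrow> real) \<Rightarrow> 'a set \<Rightarrow> 'a set \<Rightarrow> real" where
  "exp_deg w V C = 2 * exp_in w C + exp_out w V C"

definition modularity :: "('a \<Rightarrow> 'a \<Rightarrow> real) \<Rightarrow> 'a set \<Rightarrow> 'a set set \<Rightarrow> real" where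
  "modularity w V P =
     (\<Sum>C\<in>P. exp_in w C / exp_edges w V - (exp_deg w V C / (2 * exp_edges w V))^2)"

definition close_partition :: "'a set set \<Rightarrow> 'a set set \<Rightarrow> bool" where
  "close_partition P P' \<longleftrightarrow>
     (\<exists>A\<in>P. \<exists>B\<in>P. \<exists>x\<in>A. A \<noteq> B \<and>
        P' = ((P - {A, B}) \<union> {A - {x}, insert x B}) - {{}})
   \<or> (\<exists>A\<in>P. \<exists>B\<in>P. \<exists>x\<in>A. \<exists>y\<in>B. A \<noteq> B \<and>
        P' = (P - {A, B}) \<union> {insert y (A - {x}), insert x (B - {y})})
   \<or> (\<exists>A\<in>P. \<exists>x\<in>A. P' = ((P - {A}) \<union> {A - {x}, {x}}) - {{}})"

end

theory Submission
  imports Defs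
begin

(* In the two-layer model every node has the same expected number a of edges into its own
   l2-community and the same number b into each other l2-community.  Hence all expected degrees
   are equal, and the modularity contribution of a community depends only on its size and its
   internal weight.  The hypothesis 3 e_in > e_out reads 3a > 2 (n2 - 1) b, which forces a > b.
   A close partition changes at most two communities, and each change strictly lowers the sum
   of their contributions: moving a node trades internal weight a for b, swapping two nodes
   trades 2a for 2b minus their own edge, and splitting off a node loses internal weight a, which
   outweighs the reduction of the degree penalty because the degree is at most n2 a. *)

lemma partition_on_block_eq:
  assumes "partition_on V P" "A \<in> P" "B \<in> P" "x \<in> A" "x \<in> B"
  shows "A = B"
  using assms disjointD[OF partition_onD2[OF assms(1)]] by blast

lemma exp_in_insert:
  fixes w :: "'a \<Rightarrow> 'a \<Rightarrow> real"
  assumes "finite S" "x \<notin> S" "w x x = 0" "\<And>u v. w u v = w v u"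
  shows "exp_in w (insert x S) = exp_in w S + (\<Sum>v\<in>S. w x v)"
proof -
  have "(\<Sum>u\<in>S. w u x) = (\<Sum>v\<in>S. w x v)"
    using assms(4) by (intro sum.cong) auto
  then show ?thesis
    using assms(1-3) by (simp add: exp_in_def sum.distrib field_simps)
qed

lemma exp_deg_const_degree:
  fixes w :: "'a \<Rightarrow> 'a \<Rightarrow> real" and d :: real
  assumes "finite V" "C \<subseteq> V" "\<And>u. u \<in> V \<Longrightarrow> (\<Sum>v\<in>V. w u v) = d"
  shows "exp_deg w V C = card C * d"
proof -
  have "exp_deg w V C = (\<Sum>u\<in>C. (\<Sum>v\<in>C. w u v) + (\<Sum>v\<in>V - C. w u v))"
    unfolding exp_deg_def exp_in_def exp_out_def by (simp add: sum.distrib)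
  also have "\<dots> = (\<Sum>u\<in>C. d)"
  proof (rule sum.cong)
    fix u assume "u \<in> C"
    then show "(\<Sum>v\<in>C. w u v) + (\<Sum>v\<in>V - C. w u v) = d"
      using assms(3) sum.subset_diff[OF assms(2,1), of "w u"] assms(2) by auto
  qed simp
  finally show ?thesis by simp
qed

lemma exp_edges_const_degree:
  fixes w :: "'a \<Rightarrow> 'a \<Rightarrow> real" and d :: real
  assumes "\<And>u. u \<in> V \<Longrightarrow> (\<Sum>v\<in>V. w u v) = d"
  shows "exp_edges w V = card V * d / 2"
  using assms by (simp add: exp_edges_def)

lemma modularity_eq_sum_singleton: "modularity w V P = (\<Sum>C\<in>P. modularity w V {C})"
  by (simp add: modularity_def)

lemma modularity_empty_community [simp]: "modularity w V {{}} = 0"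
  by (simp add: modularity_def exp_deg_def exp_in_def exp_out_def)

lemma modularity_remove_empty:
  assumes "finite X"
  shows "modularity w V (X - {{}}) = modularity w V X"
  using sum_diff1[OF assms, of "\<lambda>C. modularity w V {C}" "{}"]
  by (simp add: modularity_eq_sum_singleton[of w V X] modularity_eq_sum_singleton[of w V "X - {{}}"])

lemma sum_replace_two:
  fixes f :: "'a \<Rightarrow> 'b :: ab_group_add"
  assumes "finite P" "A \<in> P" "B \<in> P" "C1 \<noteq> C2" "C1 \<notin> P - {A, B}" "C2 \<notin> P - {A, B}"
  shows "sum f ((P - {A, B}) \<union> {C1, C2}) = sum f P - sum f {A, B} + f C1 + f C2"
proof -
  have "(P - {A, B}) \<union> {C1, C2} = insert C1 (insert C2 (P - {A, B}))" by blast
  moreover have "sum f (P - {A, B}) = sum f P - sum f {A, B}"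
    using assms(1-3) by (intro sum_diff) auto
  ultimately show ?thesis using assms by (simp add: algebra_simps)
qed

locale regular_weighted_partition =
  fixes w :: "'a \<Rightarrow> 'a \<Rightarrow> real" and V :: "'a set" and P :: "'a set set"
    and s :: nat and a b :: real
  assumes finite_V: "finite V"
    and partition: "partition_on V P"
    and card_block: "A \<in> P \<Longrightarrow> card A = s"
    and sym: "w u v = w v u"
    and loop_free: "w x x = 0"
    and nonneg: "0 \<le> w u v"
    and sum_own_block: "A \<in> P \<Longrightarrow> x \<in> A \<Longrightarrow> (\<Sum>v\<in>A. w x v) = a"
    and sum_other_block: "B \<in> P \<Longrightarrow> x \<in> V \<Longrightarrow> x \<notin> B \<Longrightarrow> (\<Sum>v\<in>B. w x v) = b"
begin

definition degree :: real where
  "degree = a + (real (card P) - 1) * b"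

lemma finite_P: "finite P"
  using finite_V partition by (rule finite_elements)

lemma block_subset: "A \<in> P \<Longrightarrow> A \<subseteq> V"
  using partition_onD1[OF partition] by blast

lemma finite_block: "A \<in> P \<Longrightarrow> finite A"
  using block_subset finite_V finite_subset by blast

lemma block_eq: "A \<in> P \<Longrightarrow> B \<in> P \<Longrightarrow> x \<in> A \<Longrightarrow> x \<in> B \<Longrightarrow> A = B"
  using partition by (rule partition_on_block_eq)

lemma card_V: "card V = card P * s"
proof -
  have "card V = (\<Sum>A\<in>P. card A)"
    using sum.partition[OF finite_V partition, of "\<lambda>_. 1 :: nat"] by simp
  then show ?thesis using card_block by simp
qed

lemma sum_row:
  assumes "x \<in> V"
  shows "(\<Sum>v\<in>V. w x v) = degree"
proof -
  obtain A where A: "A \<in> P" "x \<in> A"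
    using assms partition_onD1[OF partition] by blast
  have "(\<Sum>v\<in>V. w x v) = (\<Sum>B\<in>P. \<Sum>v\<in>B. w x v)"
    using finite_V partition by (rule sum.partition)
  also have "\<dots> = (\<Sum>v\<in>A. w x v) + (\<Sum>B\<in>P - {A}. \<Sum>v\<in>B. w x v)"
    using finite_P A(1) by (rule sum.remove)
  also have "(\<Sum>B\<in>P - {A}. \<Sum>v\<in>B. w x v) = (\<Sum>B\<in>P - {A}. b)"
  proof (rule sum.cong)
    fix B assume "B \<in> P - {A}"
    then show "(\<Sum>v\<in>B. w x v) = b"
      using sum_other_block assms block_eq A by blast
  qed simp
  also have "card (P - {A}) = card P - 1"
    using A(1) by simp
  moreover have "card P \<ge> 1"
    using A(1) finite_P card_0_eq[OF finite_P] by fastforce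
  ultimately show ?thesis
    using sum_own_block[OF A] by (simp add: degree_def of_nat_diff)
qed

lemma exp_edges_eq: "exp_edges w V = card V * degree / 2"
  using sum_row by (rule exp_edges_const_degree)

lemma exp_in_block: "A \<in> P \<Longrightarrow> exp_in w A = s * a / 2"
  using sum_own_block card_block by (simp add: exp_in_def)

lemma exp_out_block:
  assumes "A \<in> P"
  shows "exp_out w V A = s * (degree - a)"
proof -
  have "exp_deg w V A = s * degree"
    using exp_deg_const_degree[OF finite_V block_subset[OF assms] sum_row] card_block[OF assms]
    by simp
  then show ?thesis
    using exp_in_block[OF assms] by (simp add: exp_deg_def algebra_simps)
qed

lemma exp_in_remove:
  assumes "A \<in> P" "x \<in> A"
  shows "exp_in w (A - {x}) = s * a / 2 - a"
proof -
  have "exp_in w A = exp_in w (A - {x}) + (\<Sum>v\<in>A - {x}. w x v)"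
    using exp_in_insert[of "A - {x}" x w] finite_block[OF assms(1)] loop_free sym
      insert_Diff[OF assms(2)] by simp
  moreover have "(\<Sum>v\<in>A - {x}. w x v) = a"
    using sum.remove[OF finite_block[OF assms(1)] assms(2), of "w x"] sum_own_block[OF assms]
      loop_free by simp
  ultimately show ?thesis
    using exp_in_block[OF assms(1)] by linarith
qed

lemma exp_in_insert_other:
  assumes "B \<in> P" "x \<in> V" "x \<notin> B"
  shows "exp_in w (insert x B) = s * a / 2 + b"
  using exp_in_insert[of B x w] finite_block[OF assms(1)] assms(3) loop_free sym
    sum_other_block[OF assms] exp_in_block[OF assms(1)] by simp

lemma exp_in_swap:
  assumes "A \<in> P" "x \<in> A" "y \<in> V" "y \<notin> A"
  shows "exp_in w (insert y (A - {x})) = s * a / 2 - a + b - w y x"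
proof -
  have "(\<Sum>v\<in>A - {x}. w y v) = b - w y x"
    using sum.remove[OF finite_block[OF assms(1)] assms(2), of "w y"]
      sum_other_block[OF assms(1,3,4)] by simp
  then show ?thesis
    using exp_in_insert[of "A - {x}" y w] finite_block[OF assms(1)] assms(4) loop_free sym
      exp_in_remove[OF assms(1,2)] by simp
qed

lemma block_eq_if_subset:
  assumes "A \<in> P" "C \<in> P" "C \<subseteq> A"
  shows "C = A"
proof -
  obtain z where "z \<in> C"
    using partition_onD3[OF partition] assms(2) by (metis ex_in_conv)
  then show ?thesis using block_eq[OF assms(2,1)] assms(3) by blast
qed

lemma card_remove:
  assumes "A \<in> P" "x \<in> A"
  shows "real (card (A - {x})) = real s - 1"
proof -
  have "1 \<le> card A"
    using finite_block[OF assms(1)] assms(2) card_0_eq by (fastforce simp: Suc_le_eq)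
  then show ?thesis
    using card_block[OF assms(1)] card_Diff_singleton[OF assms(2)] by (simp add: of_nat_diff)
qed

lemma b_less_a_if_in_dominates_out:
  assumes "3 \<le> card P" "0 \<le> b" "A \<in> P" "exp_out w V A < 3 * exp_in w A"
  shows "b < a"
proof -
  have "0 < s"
    using card_block[OF assms(3)] finite_block[OF assms(3)] partition_onD3[OF partition] assms(3)
    by (metis card_gt_0_iff)
  then have "degree - a < 3 * a / 2"
    using assms(4) exp_in_block[OF assms(3)] exp_out_block[OF assms(3)] by simp
  moreover have "2 * b \<le> (real (card P) - 1) * b"
    using assms(1,2) by (intro mult_right_mono) auto
  ultimately show ?thesis
    using assms(2) unfolding degree_def by linarith
qed

definition scaled_modularity :: "'a set \<Rightarrow> real" where
  "scaled_modularity C = 2 * card V * exp_in w C - (card C)\<^sup>2 * degree"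

lemma scaled_modularity_block:
  assumes "A \<in> P"
  shows "scaled_modularity A = card V * s * a - s\<^sup>2 * degree"
  unfolding scaled_modularity_def exp_in_block[OF assms] card_block[OF assms] by simp

lemma modularity_community:
  assumes "C \<subseteq> V" "0 < degree" "V \<noteq> {}"
  shows "modularity w V {C} = scaled_modularity C / ((card V)\<^sup>2 * degree)"
proof -
  have "0 < card V" using assms(3) finite_V card_gt_0_iff by blast
  then show ?thesis
    using assms(2) exp_deg_const_degree[OF finite_V assms(1) sum_row]
    by (simp add: modularity_def exp_edges_eq scaled_modularity_def field_simps power2_eq_square)
qed

lemma modularity_replace_less:
  assumes "A \<in> P" "B \<in> P" "C1 \<noteq> C2" "C1 \<notin> P - {A, B}" "C2 \<notin> P - {A, B}"
    and "C1 \<subseteq> V" "C2 \<subseteq> V" "0 < degree"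
    and "scaled_modularity C1 + scaled_modularity C2 < (\<Sum>C\<in>{A, B}. scaled_modularity C)"
  shows "modularity w V ((P - {A, B}) \<union> {C1, C2}) < modularity w V P"
proof -
  define k where "k = (card V)\<^sup>2 * degree"
  have "V \<noteq> {}" using block_subset[OF assms(1)] partition_onD3[OF partition] assms(1) by auto
  then have "0 < k"
    unfolding k_def using assms(8) finite_V card_gt_0_iff by auto
  have f: "modularity w V {C} = scaled_modularity C / k" if "C \<subseteq> V" for C
    unfolding k_def using modularity_community[OF that assms(8) \<open>V \<noteq> {}\<close>] .
  have "modularity w V {C1} + modularity w V {C2}
      < (\<Sum>C\<in>{A, B}. scaled_modularity C) / k"
    using assms(9) \<open>0 < k\<close> f[OF assms(6)] f[OF assms(7)]
    by (simp add: add_divide_distrib[symmetric] divide_strict_right_mono)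
  also have "\<dots> = (\<Sum>C\<in>{A, B}. modularity w V {C})"
    unfolding sum_divide_distrib using f block_subset assms(1,2) by (intro sum.cong) auto
  finally show ?thesis
    using sum_replace_two[OF finite_P assms(1-5), of "\<lambda>C. modularity w V {C}"]
    unfolding modularity_eq_sum_singleton[of w V P]
      modularity_eq_sum_singleton[of w V "(P - {A, B}) \<union> {C1, C2}"]
    by linarith
qed

context
  assumes b_nonneg: "0 \<le> b" and b_less_a: "b < a"
begin

lemma degree_pos: "0 < degree"
proof -
  have "- b \<le> (real (card P) - 1) * b"
    using b_nonneg by (simp add: algebra_simps)
  then show ?thesis
    using b_less_a unfolding degree_def by linarith
qed

lemma modularity_move_less:
  assumes "A \<in> P" "B \<in> P" "A \<noteq> B" "x \<in> A"
  shows "modularity w V ((P - {A, B}) \<union> {A - {x}, insert x B} - {{}}) < modularity w V P"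
proof -
  define N where "N = real (card V)"
  have "x \<in> V" "x \<notin> B"
    using assms block_subset block_eq by blast+
  have distinct: "A - {x} \<noteq> insert x B" by blast
  have new1: "A - {x} \<notin> P - {A, B}"
    using block_eq_if_subset[OF assms(1)] by blast
  have new2: "insert x B \<notin> P - {A, B}"
    using block_eq[OF assms(1) _ assms(4)] by blast
  have "real (card (insert x B)) = real s + 1"
    using card_block[OF assms(2)] finite_block[OF assms(2)] \<open>x \<notin> B\<close> by simp
  then have "scaled_modularity (A - {x}) + scaled_modularity (insert x B)
      = 2 * N * (s * a / 2 - a) - (real s - 1)\<^sup>2 * degree
        + (2 * N * (s * a / 2 + b) - (real s + 1)\<^sup>2 * degree)"
    using card_remove[OF assms(1,4)] exp_in_remove[OF assms(1,4)]
      exp_in_insert_other[OF assms(2) \<open>x \<in> V\<close> \<open>x \<notin> B\<close>]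
    by (simp add: scaled_modularity_def N_def)
  also have "\<dots> = 2 * (N * s * a - s\<^sup>2 * degree) - 2 * (N * (a - b) + degree)"
    by (simp add: power2_eq_square algebra_simps)
  also have "\<dots> < 2 * (N * s * a - s\<^sup>2 * degree)"
  proof -
    have "0 \<le> N * (a - b)"
      using b_less_a by (simp add: N_def)
    then show ?thesis using degree_pos by (simp add: algebra_simps)
  qed
  also have "\<dots> = (\<Sum>C\<in>{A, B}. scaled_modularity C)"
    using scaled_modularity_block[OF assms(1)] scaled_modularity_block[OF assms(2)] assms(3)
    by (simp add: N_def)
  finally have "modularity w V ((P - {A, B}) \<union> {A - {x}, insert x B}) < modularity w V P"
    using modularity_replace_less[OF assms(1,2) distinct new1 new2] block_subset[OF assms(1)]
      block_subset[OF assms(2)] \<open>x \<in> V\<close> degree_pos by blast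
  then show ?thesis
    using modularity_remove_empty[of "(P - {A, B}) \<union> {A - {x}, insert x B}" w V] finite_P by simp
qed

lemma modularity_swap_less:
  assumes "A \<in> P" "B \<in> P" "A \<noteq> B" "x \<in> A" "y \<in> B"
  shows "modularity w V ((P - {A, B}) \<union> {insert y (A - {x}), insert x (B - {y})})
    < modularity w V P"
proof -
  define N where "N = real (card V)"
  have "x \<in> V" "y \<in> V" "x \<notin> B" "y \<notin> A" "x \<noteq> y"
    using assms block_subset block_eq by blast+
  have distinct: "insert y (A - {x}) \<noteq> insert x (B - {y})"
    using \<open>x \<noteq> y\<close> by blast
  have new1: "insert y (A - {x}) \<notin> P - {A, B}"
    using block_eq[OF assms(2) _ assms(5)] by blast
  have new2: "insert x (B - {y}) \<notin> P - {A, B}"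
    using block_eq[OF assms(1) _ assms(4)] by blast
  have "real (card (insert y (A - {x}))) = s" "real (card (insert x (B - {y}))) = s"
    using card_remove[OF assms(1,4)] card_remove[OF assms(2,5)] finite_block assms(1,2)
      \<open>x \<notin> B\<close> \<open>y \<notin> A\<close> by simp_all
  then have "scaled_modularity (insert y (A - {x})) + scaled_modularity (insert x (B - {y}))
      = 2 * N * (s * a / 2 - a + b - w y x) - s\<^sup>2 * degree
        + (2 * N * (s * a / 2 - a + b - w x y) - s\<^sup>2 * degree)"
    using exp_in_swap[OF assms(1,4) \<open>y \<in> V\<close> \<open>y \<notin> A\<close>]
      exp_in_swap[OF assms(2,5) \<open>x \<in> V\<close> \<open>x \<notin> B\<close>]
    by (simp add: scaled_modularity_def N_def)
  also have "\<dots> = 2 * (N * s * a - s\<^sup>2 * degree) - 2 * N * (2 * (a - b) + w y x + w x y)"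
    by (simp add: algebra_simps)
  also have "\<dots> < 2 * (N * s * a - s\<^sup>2 * degree)"
  proof -
    have "0 < N"
      using \<open>x \<in> V\<close> finite_V card_gt_0_iff by (auto simp: N_def)
    moreover have "0 < 2 * (a - b) + w y x + w x y"
      using b_less_a nonneg[of y x] nonneg[of x y] by (intro add_pos_nonneg) auto
    ultimately show ?thesis by simp
  qed
  also have "\<dots> = (\<Sum>C\<in>{A, B}. scaled_modularity C)"
    using scaled_modularity_block[OF assms(1)] scaled_modularity_block[OF assms(2)] assms(3)
    by (simp add: N_def)
  finally show ?thesis
    using modularity_replace_less[OF assms(1,2) distinct new1 new2] block_subset[OF assms(1)]
      block_subset[OF assms(2)] \<open>x \<in> V\<close> \<open>y \<in> V\<close> degree_pos by blast
qed

lemma modularity_split_less: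
  assumes "A \<in> P" "x \<in> A"
  shows "modularity w V ((P - {A}) \<union> {A - {x}, {x}} - {{}}) < modularity w V P"
proof -
  define N where "N = real (card V)"
  define m where "m = real (card P)"
  have "x \<in> V"
    using assms block_subset by blast
  have distinct: "A - {x} \<noteq> {x}" by blast
  have new1: "A - {x} \<notin> P - {A, A}"
    using block_eq_if_subset[OF assms(1)] by blast
  have new2: "{x} \<notin> P - {A, A}"
    using block_eq[OF assms(1) _ assms(2)] by blast
  have "exp_in w {x} = 0"
    using loop_free by (simp add: exp_in_def)
  then have "scaled_modularity (A - {x}) + scaled_modularity {x}
      = 2 * N * (s * a / 2 - a) - (real s - 1)\<^sup>2 * degree - degree"
    using card_remove[OF assms] exp_in_remove[OF assms] by (simp add: scaled_modularity_def N_def)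
  also have "\<dots> = (N * s * a - s\<^sup>2 * degree) - 2 * (N * a - (real s - 1) * degree)"
    by (simp add: power2_eq_square algebra_simps)
  also have "\<dots> < N * s * a - s\<^sup>2 * degree"
  proof -
    have "1 \<le> m" "1 \<le> real s"
      using assms card_remove[OF assms] card_V finite_P card_0_eq
      by (auto simp: m_def Suc_le_eq)
    have "degree \<le> m * a"
      using b_less_a \<open>1 \<le> m\<close> mult_left_mono[of b a "m - 1"]
      by (simp add: degree_def m_def algebra_simps)
    then have "(real s - 1) * degree \<le> (real s - 1) * (m * a)"
      using \<open>1 \<le> real s\<close> by (intro mult_left_mono) auto
    also have "\<dots> < N * a"
      using \<open>1 \<le> m\<close> b_less_a b_nonneg card_V by (simp add: N_def m_def algebra_simps)
    finally show ?thesis by simp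
  qed
  also have "\<dots> = (\<Sum>C\<in>{A, A}. scaled_modularity C)"
    using scaled_modularity_block[OF assms(1)] by (simp add: N_def)
  finally have "modularity w V ((P - {A, A}) \<union> {A - {x}, {x}}) < modularity w V P"
    using modularity_replace_less[OF assms(1,1) distinct new1 new2] block_subset[OF assms(1)]
      \<open>x \<in> V\<close> degree_pos by blast
  then show ?thesis
    using modularity_remove_empty[of "(P - {A}) \<union> {A - {x}, {x}}" w V] finite_P by simp
qed

theorem modularity_close_partition_less:
  assumes "close_partition P P'"
  shows "modularity w V P' < modularity w V P"
  using assms modularity_move_less modularity_swap_less modularity_split_less
  unfolding close_partition_def by blast

end

end

lemma same_comm_iff:
  assumes "partition_on V P" "X \<in> P" "x \<in> X"
  shows "same_comm P x v \<longleftrightarrow> v \<in> X"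
  using assms partition_on_block_eq[OF assms(1)] unfolding same_comm_def by blast

lemma edge_prob2_sym: "edge_prob2 P1 p1 P2 p2 u v = edge_prob2 P1 p1 P2 p2 v u"
  unfolding edge_prob2_def same_comm_def by auto

lemma edge_prob2_nonneg:
  assumes "0 \<le> p1" "p1 \<le> 1" "0 \<le> p2" "p2 \<le> 1"
  shows "0 \<le> edge_prob2 P1 p1 P2 p2 u v"
proof -
  have "(1 - (if same_comm P1 u v then p1 else 0)) * (1 - (if same_comm P2 u v then p2 else 0)) \<le> 1"
    using assms by (intro mult_le_one) auto
  then show ?thesis unfolding edge_prob2_def by auto
qed

lemma sum_edge_prob2_own_block:
  fixes p1 p2 :: real
  assumes "partition_on V P1" "partition_on V P2" "A \<in> P2" "finite A"
    and "X \<in> P1" "x \<in> A" "x \<in> X"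
  shows "(\<Sum>v\<in>A. edge_prob2 P1 p1 P2 p2 x v)
    = (real (card (A \<inter> X)) - 1) * (p1 + p2 - p1 * p2) + (real (card A) - card (A \<inter> X)) * p2"
proof -
  define q where "q = p1 + p2 - p1 * p2"
  have "edge_prob2 P1 p1 P2 p2 x v = (if v \<in> X then q else p2) - (if v = x then q else 0)"
    if "v \<in> A" for v
    using that assms same_comm_iff[OF assms(1,5,7)] same_comm_iff[OF assms(2,3,6)]
    by (auto simp: edge_prob2_def q_def algebra_simps)
  then have "(\<Sum>v\<in>A. edge_prob2 P1 p1 P2 p2 x v)
      = (\<Sum>v\<in>A. if v \<in> X then q else p2) - (\<Sum>v\<in>A. if v = x then q else 0)"
    by (simp add: sum_subtractf)
  also have "\<dots> = card (A \<inter> X) * q + card (A - X) * p2 - q"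
    using assms(4,6) by (simp add: sum.If_cases Diff_eq)
  finally show ?thesis
    using card_Int_Diff[OF assms(4), of X] by (simp add: q_def algebra_simps)
qed

lemma sum_edge_prob2_other_block:
  fixes p1 p2 :: real
  assumes "partition_on V P1" "partition_on V P2" "B \<in> P2" "finite B"
    and "X \<in> P1" "x \<in> X" "x \<notin> B"
  shows "(\<Sum>v\<in>B. edge_prob2 P1 p1 P2 p2 x v) = card (B \<inter> X) * p1"
proof -
  have "edge_prob2 P1 p1 P2 p2 x v = (if v \<in> X then p1 else 0)" if "v \<in> B" for v
  proof -
    have "\<not> same_comm P2 x v"
      using that assms(3,7) partition_on_block_eq[OF assms(2)] unfolding same_comm_def by blast
    then show ?thesis
      using that assms(7) same_comm_iff[OF assms(1,5,6)] by (auto simp: edge_prob2_def)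
  qed
  then show ?thesis
    using assms(4) by (simp add: sum.If_cases)
qed

lemma regular_weighted_partition_edge_prob2:
  assumes "finite V" "partition_on V P1" "partition_on V P2"
    and "\<And>B. B \<in> P2 \<Longrightarrow> card B = s"
    and "\<And>A B. A \<in> P1 \<Longrightarrow> B \<in> P2 \<Longrightarrow> card (B \<inter> A) = t"
    and "0 \<le> p1" "p1 \<le> 1" "0 \<le> p2" "p2 \<le> 1"
  shows "regular_weighted_partition (edge_prob2 P1 p1 P2 p2) V P2 s
    ((real t - 1) * (p1 + p2 - p1 * p2) + (real s - real t) * p2) (real t * p1)"
proof
  have finite_block: "finite B" if "B \<in> P2" for B
    using that assms(1,3) partition_onD1 by (metis Union_upper finite_subset)
  have in_P1: "\<exists>X\<in>P1. x \<in> X" if "x \<in> V" for x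
    using that partition_onD1[OF assms(2)] by blast
  show "(\<Sum>v\<in>A. edge_prob2 P1 p1 P2 p2 x v) = (real t - 1) * (p1 + p2 - p1 * p2) + (real s - real t) * p2"
    if A: "A \<in> P2" "x \<in> A" for A x
  proof -
    have "x \<in> V"
      using A partition_onD1[OF assms(3)] by blast
    then obtain X where "X \<in> P1" "x \<in> X"
      using in_P1 by blast
    then show ?thesis
      using sum_edge_prob2_own_block[OF assms(2,3) A(1) finite_block[OF A(1)]] A assms(4,5)
      by simp
  qed
  show "(\<Sum>v\<in>B. edge_prob2 P1 p1 P2 p2 x v) = real t * p1"
    if B: "B \<in> P2" "x \<in> V" "x \<notin> B" for B x
  proof -
    obtain X where "X \<in> P1" "x \<in> X"
      using in_P1 B(2) by blast
    then show ?thesis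
      using sum_edge_prob2_other_block[OF assms(2,3) B(1) finite_block[OF B(1)]] B assms(5)
      by simp
  qed
  show "edge_prob2 P1 p1 P2 p2 x x = 0" for x
    by (simp add: edge_prob2_def)
qed (use assms edge_prob2_sym edge_prob2_nonneg in auto)

theorem theorem10:
  fixes V :: "'a set" and P1 P2 P' :: "'a set set" and n n1 n2 :: nat and p1 p2 :: real
  assumes "finite V" and "card V = n"
    and "partition_on V P1" and "partition_on V P2"
    and "card P1 = n1" and "card P2 = n2"
    and "\<forall>A\<in>P1. card A * n1 = n" and "\<forall>B\<in>P2. card B * n2 = n"
    and "\<forall>A\<in>P1. \<forall>B\<in>P2. card (A \<inter> B) * (n1 * n2) = n"
    and "n1 \<ge> 4" and "n2 \<ge> 4"
    and "0.05 \<le> p1" and "p1 \<le> 1" and "0.05 \<le> p2" and "p2 \<le> 1"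
    and "n \<ge> 2 * n1 * n2"
    and "\<forall>B\<in>P2. 3 * exp_in (edge_prob2 P1 p1 P2 p2) B > exp_out (edge_prob2 P1 p1 P2 p2) V B"
    and "close_partition P2 P'"
  shows "modularity (edge_prob2 P1 p1 P2 p2) V P2 > modularity (edge_prob2 P1 p1 P2 p2) V P'"
proof -
  define s where "s = n div n2"
  define t where "t = n div (n1 * n2)"
  define a where "a = (real t - 1) * (p1 + p2 - p1 * p2) + (real s - real t) * p2"
  define b where "b = real t * p1"
  have card_block: "card B = s" if "B \<in> P2" for B
    using assms(8,11) that unfolding s_def by (metis nonzero_mult_div_cancel_right not_numeral_le_zero)
  have card_inter: "card (B \<inter> A) = t" if "A \<in> P1" "B \<in> P2" for A B
    using assms(9,10,11) that unfolding t_def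
    by (metis Int_commute mult_eq_0_iff nonzero_mult_div_cancel_right not_numeral_le_zero)
  interpret regular_weighted_partition "edge_prob2 P1 p1 P2 p2" V P2 s a b
    unfolding a_def b_def
    by (rule regular_weighted_partition_edge_prob2) (use assms card_block card_inter in auto)
  have "0 \<le> b"
    using assms(12) by (simp add: b_def)
  moreover obtain B where "B \<in> P2"
    using assms(6,11) by fastforce
  ultimately have "b < a"
    using b_less_a_if_in_dominates_out assms(6,11,17) by auto
  then show ?thesis
    using modularity_close_partition_less[OF \<open>0 \<le> b\<close>] assms(18) by blast
qed

end
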